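(* Assume the following setting. Let $(E,\mathcal{E},\mu)$ be a non-atomic $\sigma$-finite measure space with $\mu(E)=\infty$. Let $(a_n)_{n\ge1}$ be positive numbers with $a_n\to\infty$ and $a_n=o(n)$. For each $n$ let $P_n$ be a probability measure on $(E,\mathcal{E})$ such that $\mu_n:=(n/a_n)P_n$ satisfies $\mu_n(B)\le\mu_{n+1}(B)$ and $\mu_n(B)\to\mu(B)$ for every $B\in\mathcal{E}$. Let $k_1,k_2\in\mathbb{N}_+$, $f\in L^2(\mu^{k_1})$, $g\in L^2(\mu^{k_2})$ and $0\le l\le\min(k_1,k_2)$. Then for every $n\in\mathbb{N}_+$, $$|F_l^{(n)}(f,g)|\le\|f\|_{L^2(\mu^{k_1})}\,\|g\|_{L^2(\mu^{k_2})}.$$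
   Context: Write $f\otimes g(x_1,\dots,x_{k_1+k_2})=f(x_1,\dots,x_{k_1})g(x_{k_1+1},\dots,x_{k_1+k_2})$. A diagram with $l$ edges is an edge set $\mathcal{N}=\{(j_1,j_1'),\dots,(j_l,j_l')\}$ with $1\le j_s\le k_1$, $k_1+1\le j_s'\le k_1+k_2$, the $j_s$ pairwise distinct and the $j_s'$ pairwise distinct; let $\mathcal{B}(l)$ be the set of all such diagrams, so $|\mathcal{B}(l)|=\frac{k_1!k_2!}{(k_1-l)!(k_2-l)!l!}$. For $\mathcal{N}\in\mathcal{B}(l)$, $(f\otimes g)_{\mathcal{N}}$ is the function of $k_1+k_2-l$ variables obtained from $f\otimes g$ by setting $x_{j_s}=x_{j_s'}$ for $s=1,\dots,l$ (for $l=0$ it is $f\otimes g$). Define $$F_l^{(n)}(f,g)=\Big(\frac{n}{a_n}\Big)^{(k_1+k_2)/2}\int_{E^{k_1+k_2-l}}\frac1{|\mathcal{B}(l)|}\sum_{\mathcal{N}\in\mathcal{B}(l)}(f\otimes g)_{\mathcal{N}}\,dP_n^{k_1+k_2-l}.$$ $\mu^k$, $P_n^k$ denote $k$-fold product measures. *)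

theory Defs
  imports "HOL-Probability.Probability" "HOL-Library.Landau_Symbols"
begin

text \<open>Variables are indexed from 0: f has variables 0..k1-1, g has variables 0..k2-1,
  and the tensor product f\<otimes>g has variables 0..k1+k2-1, the g-variables being k1..k1+k2-1.\<close>

definition nonatomic :: "'a measure \<Rightarrow> bool" where
  "nonatomic M \<longleftrightarrow> (\<forall>A\<in>sets M. 0 < emeasure M A \<longrightarrow>
     (\<exists>B\<in>sets M. B \<subseteq> A \<and> 0 < emeasure M B \<and> emeasure M B < emeasure M A))"

definition tensor :: "nat \<Rightarrow> nat \<Rightarrow> ((nat \<Rightarrow> 'a) \<Rightarrow> real) \<Rightarrow> ((nat \<Rightarrow> 'a) \<Rightarrow> real)
    \<Rightarrow> (nat \<Rightarrow> 'a) \<Rightarrow> real" where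
  "tensor k1 k2 f g x = f (restrict x {..<k1}) * g (\<lambda>i\<in>{..<k2}. x (k1 + i))"

definition diagrams :: "nat \<Rightarrow> nat \<Rightarrow> nat \<Rightarrow> (nat \<times> nat) set set" where
  "diagrams k1 k2 l = {N. N \<subseteq> {..<k1} \<times> {k1..<k1+k2} \<and> card N = l
      \<and> inj_on fst N \<and> inj_on snd N}"

definition rank :: "nat set \<Rightarrow> nat \<Rightarrow> nat" where
  "rank R i = card {r\<in>R. r < i}"

text \<open>(h)_N: function of k1+k2-l variables obtained by identifying x_{j'} with x_j for
  each edge (j,j') of N; the remaining variables (those not of the form j') are
  relabelled 0..k1+k2-l-1 in increasing order.\<close>
definition contract :: "nat \<Rightarrow> nat \<Rightarrow> (nat \<times> nat) set \<Rightarrow> ((nat \<Rightarrow> 'a) \<Rightarrow> real)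
    \<Rightarrow> (nat \<Rightarrow> 'a) \<Rightarrow> real" where
  "contract k1 k2 N h y =
     (let R = {..<k1+k2} - snd ` N in
      h (\<lambda>i\<in>{..<k1+k2}. if i \<in> snd ` N then y (rank R (THE j. (j, i) \<in> N))
                          else y (rank R i)))"

definition F_l :: "nat \<Rightarrow> nat \<Rightarrow> nat \<Rightarrow> real \<Rightarrow> real \<Rightarrow> 'a measure
    \<Rightarrow> ((nat \<Rightarrow> 'a) \<Rightarrow> real) \<Rightarrow> ((nat \<Rightarrow> 'a) \<Rightarrow> real) \<Rightarrow> real" where
  "F_l k1 k2 l nn an Pn f g =
     (nn / an) powr (real (k1 + k2) / 2) *
     integral\<^sup>L (PiM {..<k1+k2-l} (\<lambda>_. Pn))
       (\<lambda>y. (1 / real (card (diagrams k1 k2 l))) *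
            (\<Sum>N\<in>diagrams k1 k2 l. contract k1 k2 N (tensor k1 k2 f g) y))"

definition L2norm :: "'a measure \<Rightarrow> ('a \<Rightarrow> real) \<Rightarrow> real" where
  "L2norm M f = sqrt (integral\<^sup>L M (\<lambda>x. (f x)\<^sup>2))"

definition memL2 :: "'a measure \<Rightarrow> ('a \<Rightarrow> real) \<Rightarrow> bool" where
  "memL2 M f \<longleftrightarrow> f \<in> borel_measurable M \<and> integrable M (\<lambda>x. (f x)\<^sup>2)"

end

theory Submission
  imports Defs
begin

text \<open>Put \<open>c = n / a\<^sub>n\<close>. Since \<open>(m / a\<^sub>m) P\<^sub>m\<close> increases to \<open>\<mu>\<close>, \<open>c P\<^sub>n \<le> \<mu>\<close>, hence
  \<open>c\<^sup>k \<integral> u dP\<^sub>n\<^sup>k \<le> \<integral> u d\<mu>\<^sup>k\<close> for non-negative \<open>u\<close>. Every contracted term is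
  \<open>f(y \<circ> \<sigma>\<^sub>1) g(y \<circ> \<sigma>\<^sub>2)\<close> with \<open>\<sigma>\<^sub>1, \<sigma>\<^sub>2\<close> injective, and the image of \<open>P\<^sub>n\<^sup>m\<close> under an injective
  choice of coordinates is again a product of copies of \<open>P\<^sub>n\<close>. Cauchy-Schwarz in \<open>L\<^sup>2(P\<^sub>n\<^sup>m)\<close>
  therefore bounds each term, scaled by \<open>c\<^bsup>(k\<^sub>1+k\<^sub>2)/2\<^esup>\<close>, by \<open>\<parallel>f\<parallel> \<parallel>g\<parallel>\<close>, and so also their average.\<close>

lemma LIMSEQ_le_if_incseq_from:
  fixes X :: "nat \<Rightarrow> 'a::linorder_topology"
  assumes "\<And>m. n \<le> m \<Longrightarrow> X m \<le> X (Suc m)" and "X \<longlonglongrightarrow> L"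
  shows "X n \<le> L"
proof -
  have "incseq (\<lambda>m. X (m + n))"
    by (rule incseq_SucI) (simp add: assms(1))
  moreover have "(\<lambda>m. X (m + n)) \<longlonglongrightarrow> L"
    using assms(2) by (rule LIMSEQ_ignore_initial_segment)
  ultimately show ?thesis
    using incseq_le[of "\<lambda>m. X (m + n)" L 0] by simp
qed

lemma nn_integral_scaled_le:
  fixes c :: ennreal
  assumes sets: "sets P = sets M"
    and le: "\<And>A. A \<in> sets M \<Longrightarrow> c * emeasure P A \<le> emeasure M A"
    and u: "u \<in> borel_measurable M"
  shows "c * (\<integral>\<^sup>+x. u x \<partial>P) \<le> (\<integral>\<^sup>+x. u x \<partial>M)"
proof -
  have "c * emeasure P A \<le> emeasure M A" for A
    using le[of A] emeasure_notin_sets[of A P] sets by (cases "A \<in> sets M") auto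
  then have "scale_measure c P \<le> M"
    using sets sets_eq_imp_space_eq[OF sets] by (simp add: le_measure_iff le_fun_def space_scale_measure)
  moreover have "c * (\<integral>\<^sup>+x. u x \<partial>P) = (\<integral>\<^sup>+x. u x \<partial>scale_measure c P)"
    using u by (simp add: nn_integral_scale_measure measurable_cong_sets[OF sets refl])
  ultimately show ?thesis
    using sets by (simp add: nn_integral_mono_measure)
qed

lemma nn_integral_PiM_scaled_le:
  fixes c :: ennreal
  assumes sf_P: "\<And>i. sigma_finite_measure (P i)" and sf_M: "\<And>i. sigma_finite_measure (M i)"
    and sets: "\<And>i. sets (P i) = sets (M i)"
    and le: "\<And>i A. A \<in> sets (M i) \<Longrightarrow> c * emeasure (P i) A \<le> emeasure (M i) A"
    and "finite I" and "u \<in> borel_measurable (PiM I M)"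
  shows "c ^ card I * (\<integral>\<^sup>+x. u x \<partial>PiM I P) \<le> (\<integral>\<^sup>+x. u x \<partial>PiM I M)"
  using assms(5,6)
proof (induction I arbitrary: u rule: finite_induct)
  case empty
  then show ?case by (simp add: PiM_empty)
next
  case (insert i I)
  interpret P: product_sigma_finite P using sf_P by (simp add: product_sigma_finite_def)
  interpret M: product_sigma_finite M using sf_M by (simp add: product_sigma_finite_def)
  have sets_PiM: "sets (PiM J P) = sets (PiM J M)" for J
    using sets by (intro sets_PiM_cong) auto
  note u[measurable] = insert.prems
  have u_P: "u \<in> borel_measurable (PiM (insert i I) P)"
    using u by (simp add: measurable_cong_sets[OF sets_PiM refl])
  have "c ^ card (insert i I) * (\<integral>\<^sup>+x. u x \<partial>PiM (insert i I) P)
      = c ^ card I * (\<integral>\<^sup>+x. c * (\<integral>\<^sup>+y. u (x(i := y)) \<partial>P i) \<partial>PiM I P)"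
    using insert u_P by (simp add: P.product_nn_integral_insert nn_integral_cmult mult_ac)
  also have "\<dots> \<le> c ^ card I * (\<integral>\<^sup>+x. (\<integral>\<^sup>+y. u (x(i := y)) \<partial>M i) \<partial>PiM I P)"
  proof (intro mult_left_mono nn_integral_mono nn_integral_scaled_le[OF sets le])
    fix x assume "x \<in> space (PiM I P)"
    then have "x \<in> space (PiM I M)"
      using sets_eq_imp_space_eq[OF sets_PiM] by blast
    then show "(\<lambda>y. u (x(i := y))) \<in> borel_measurable (M i)"
      by measurable
  qed auto
  also have "\<dots> \<le> (\<integral>\<^sup>+x. (\<integral>\<^sup>+y. u (x(i := y)) \<partial>M i) \<partial>PiM I M)"
    by (rule insert.IH) measurable
  also have "\<dots> = (\<integral>\<^sup>+x. u x \<partial>PiM (insert i I) M)"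
    using insert by (simp add: M.product_nn_integral_insert)
  finally show ?case .
qed

lemma measurable_PiM_reindex:
  assumes "\<sigma> \<in> I \<rightarrow> K"
  shows "(\<lambda>y. \<lambda>i\<in>I. y (\<sigma> i)) \<in> PiM K (\<lambda>_. M) \<rightarrow>\<^sub>M PiM I (\<lambda>_. M)"
  using assms by (intro measurable_restrict measurable_component_singleton) auto

lemma nn_integral_PiM_reindex:
  assumes "prob_space P" and "inj_on \<sigma> I" and \<sigma>: "\<sigma> \<in> I \<rightarrow> K"
    and h: "h \<in> borel_measurable (PiM I (\<lambda>_. P))"
  shows "(\<integral>\<^sup>+y. h (\<lambda>i\<in>I. y (\<sigma> i)) \<partial>PiM K (\<lambda>_. P)) = (\<integral>\<^sup>+x. h x \<partial>PiM I (\<lambda>_. P))"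
proof -
  have "distr (PiM K (\<lambda>_. P)) (PiM I (\<lambda>_. P)) (\<lambda>y. \<lambda>i\<in>I. y (\<sigma> i)) = PiM I (\<lambda>_. P)"
    using distr_PiM_reindex[of K "\<lambda>_. P" \<sigma> I] assms by simp
  then show ?thesis
    using nn_integral_distr[OF measurable_PiM_reindex[OF \<sigma>, where M=P]] h by simp
qed

lemma nn_integral_PiM_reindex_square_le:
  fixes f :: "(nat \<Rightarrow> 'a) \<Rightarrow> real" and c :: ennreal
  assumes P: "prob_space P" and M: "sigma_finite_measure M" and sets: "sets P = sets M"
    and le: "\<And>A. A \<in> sets M \<Longrightarrow> c * emeasure P A \<le> emeasure M A"
    and \<sigma>: "\<sigma> \<in> {..<k} \<rightarrow> K" "inj_on \<sigma> {..<k}"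
    and f: "memL2 (PiM {..<k} (\<lambda>_. M)) f"
  shows "c ^ k * (\<integral>\<^sup>+y. ennreal ((f (\<lambda>i\<in>{..<k}. y (\<sigma> i)))\<^sup>2) \<partial>PiM K (\<lambda>_. P))
           \<le> ennreal ((L2norm (PiM {..<k} (\<lambda>_. M)) f)\<^sup>2)"
proof -
  have sets_PiM: "sets (PiM {..<k} (\<lambda>_. P)) = sets (PiM {..<k} (\<lambda>_. M))"
    using sets by (intro sets_PiM_cong) auto
  have f_M: "f \<in> borel_measurable (PiM {..<k} (\<lambda>_. M))"
    and f_sq: "integrable (PiM {..<k} (\<lambda>_. M)) (\<lambda>x. (f x)\<^sup>2)"
    using f by (auto simp: memL2_def)
  have f_P[measurable]: "f \<in> borel_measurable (PiM {..<k} (\<lambda>_. P))"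
    using f_M by (simp add: measurable_cong_sets[OF sets_PiM refl])
  have f_sq_P: "(\<lambda>x. ennreal ((f x)\<^sup>2)) \<in> borel_measurable (PiM {..<k} (\<lambda>_. P))"
    by measurable
  have "c ^ k * (\<integral>\<^sup>+y. ennreal ((f (\<lambda>i\<in>{..<k}. y (\<sigma> i)))\<^sup>2) \<partial>PiM K (\<lambda>_. P))
      = c ^ card {..<k} * (\<integral>\<^sup>+x. ennreal ((f x)\<^sup>2) \<partial>PiM {..<k} (\<lambda>_. P))"
    by (simp add: nn_integral_PiM_reindex[OF P \<sigma>(2,1) f_sq_P])
  also have "\<dots> \<le> (\<integral>\<^sup>+x. ennreal ((f x)\<^sup>2) \<partial>PiM {..<k} (\<lambda>_. M))"
    using P M sets le by (intro nn_integral_PiM_scaled_le) (auto simp: prob_space_imp_sigma_finite)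
  also have "\<dots> = ennreal (\<integral>x. (f x)\<^sup>2 \<partial>PiM {..<k} (\<lambda>_. M))"
    using f_sq by (rule nn_integral_eq_integral) auto
  also have "\<dots> = ennreal ((L2norm (PiM {..<k} (\<lambda>_. M)) f)\<^sup>2)"
    by (simp add: L2norm_def integral_nonneg)
  finally show ?thesis .
qed

lemma L2norm_nonneg: "0 \<le> L2norm M f"
  by (simp add: L2norm_def integral_nonneg)

lemma scaled_Cauchy_Schwarz_integral_le:
  fixes F G :: "'a \<Rightarrow> real"
  assumes [measurable]: "F \<in> borel_measurable Q" "G \<in> borel_measurable Q"
    and a: "0 < a" and b: "0 < b" and "0 \<le> A" "0 \<le> B"
    and F: "ennreal a * (\<integral>\<^sup>+y. ennreal ((F y)\<^sup>2) \<partial>Q) \<le> ennreal (A\<^sup>2)"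
    and G: "ennreal b * (\<integral>\<^sup>+y. ennreal ((G y)\<^sup>2) \<partial>Q) \<le> ennreal (B\<^sup>2)"
  shows "integrable Q (\<lambda>y. F y * G y)"
    and "sqrt (a * b) * \<bar>\<integral>y. F y * G y \<partial>Q\<bar> \<le> A * B"
proof -
  define X where "X = (\<integral>\<^sup>+y. ennreal \<bar>F y * G y\<bar> \<partial>Q)"
  have "X\<^sup>2 = (\<integral>\<^sup>+y. ennreal \<bar>F y\<bar> * ennreal \<bar>G y\<bar> \<partial>Q)\<^sup>2"
    by (simp add: X_def abs_mult ennreal_mult)
  also have "\<dots> \<le> (\<integral>\<^sup>+y. (ennreal \<bar>F y\<bar>)\<^sup>2 \<partial>Q) * (\<integral>\<^sup>+y. (ennreal \<bar>G y\<bar>)\<^sup>2 \<partial>Q)"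
    by (rule Cauchy_Schwarz_nn_integral) measurable
  also have "\<dots> = (\<integral>\<^sup>+y. ennreal ((F y)\<^sup>2) \<partial>Q) * (\<integral>\<^sup>+y. ennreal ((G y)\<^sup>2) \<partial>Q)"
    by (simp add: ennreal_power)
  finally have "ennreal a * ennreal b * X\<^sup>2 \<le> ennreal a * ennreal b *
      ((\<integral>\<^sup>+y. ennreal ((F y)\<^sup>2) \<partial>Q) * (\<integral>\<^sup>+y. ennreal ((G y)\<^sup>2) \<partial>Q))"
    by (rule mult_left_mono) simp
  also have "\<dots> = (ennreal a * (\<integral>\<^sup>+y. ennreal ((F y)\<^sup>2) \<partial>Q)) *
      (ennreal b * (\<integral>\<^sup>+y. ennreal ((G y)\<^sup>2) \<partial>Q))"
    by (simp add: mult_ac)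
  also have "\<dots> \<le> ennreal (A\<^sup>2) * ennreal (B\<^sup>2)"
    using F G by (rule mult_mono) simp_all
  also have "\<dots> = ennreal ((A * B)\<^sup>2)"
    by (simp add: power_mult_distrib ennreal_mult)
  finally have bound: "ennreal a * ennreal b * X\<^sup>2 \<le> ennreal ((A * B)\<^sup>2)" .
  txt \<open>Squares cannot be cancelled in \<open>ennreal\<close>, so the comparison is moved to the reals.\<close>
  have "X \<noteq> \<infinity>"
  proof
    assume "X = \<infinity>"
    then have "ennreal a * ennreal b * X\<^sup>2 = \<infinity>"
      using a b by (simp add: ennreal_mult_top)
    with bound show False
      by (simp add: top_unique)
  qed
  then obtain x where X: "X = ennreal x" and "0 \<le> x"
    by (cases X rule: ennreal_cases) auto
  then show int: "integrable Q (\<lambda>y. F y * G y)"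
    by (intro integrableI_bounded) (simp_all add: X_def)
  have "\<bar>\<integral>y. F y * G y \<partial>Q\<bar> \<le> x"
    using integral_norm_bound_ennreal[OF int] \<open>0 \<le> x\<close> by (simp add: X_def[symmetric] X)
  then have "sqrt (a * b) * \<bar>\<integral>y. F y * G y \<partial>Q\<bar> \<le> sqrt (a * b) * x"
    using a b by (intro mult_left_mono) simp_all
  also have "sqrt (a * b) * x \<le> A * B"
  proof (rule power2_le_imp_le)
    have "ennreal (a * b * x\<^sup>2) \<le> ennreal ((A * B)\<^sup>2)"
      using bound a b \<open>0 \<le> x\<close> by (simp add: X ennreal_power ennreal_mult)
    then show "(sqrt (a * b) * x)\<^sup>2 \<le> (A * B)\<^sup>2"
      using a b by (simp add: power_mult_distrib ennreal_le_iff)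
  qed (use \<open>0 \<le> A\<close> \<open>0 \<le> B\<close> in simp)
  finally show "sqrt (a * b) * \<bar>\<integral>y. F y * G y \<partial>Q\<bar> \<le> A * B" .
qed

lemma reindexed_product_integral_le:
  fixes f g :: "(nat \<Rightarrow> 'a) \<Rightarrow> real" and c :: real
  assumes P: "prob_space P" and M: "sigma_finite_measure M" and sets: "sets P = sets M"
    and c: "0 < c" and le: "\<And>A. A \<in> sets M \<Longrightarrow> ennreal c * emeasure P A \<le> emeasure M A"
    and \<sigma>\<^sub>1: "\<sigma>\<^sub>1 \<in> {..<k\<^sub>1} \<rightarrow> K" "inj_on \<sigma>\<^sub>1 {..<k\<^sub>1}"
    and \<sigma>\<^sub>2: "\<sigma>\<^sub>2 \<in> {..<k\<^sub>2} \<rightarrow> K" "inj_on \<sigma>\<^sub>2 {..<k\<^sub>2}"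
    and f: "memL2 (PiM {..<k\<^sub>1} (\<lambda>_. M)) f" and g: "memL2 (PiM {..<k\<^sub>2} (\<lambda>_. M)) g"
  defines "h \<equiv> \<lambda>y. f (\<lambda>i\<in>{..<k\<^sub>1}. y (\<sigma>\<^sub>1 i)) * g (\<lambda>i\<in>{..<k\<^sub>2}. y (\<sigma>\<^sub>2 i))"
  shows "integrable (PiM K (\<lambda>_. P)) h"
    and "c powr (real (k\<^sub>1 + k\<^sub>2) / 2) * \<bar>integral\<^sup>L (PiM K (\<lambda>_. P)) h\<bar>
           \<le> L2norm (PiM {..<k\<^sub>1} (\<lambda>_. M)) f * L2norm (PiM {..<k\<^sub>2} (\<lambda>_. M)) g"
proof -
  have sets_PiM: "sets (PiM I (\<lambda>_. P)) = sets (PiM I (\<lambda>_. M))" for I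
    using sets by (intro sets_PiM_cong) auto
  have f_P: "f \<in> borel_measurable (PiM {..<k\<^sub>1} (\<lambda>_. P))"
    and g_P: "g \<in> borel_measurable (PiM {..<k\<^sub>2} (\<lambda>_. P))"
    using f g by (simp_all add: memL2_def measurable_cong_sets[OF sets_PiM refl])
  have F: "(\<lambda>y. f (\<lambda>i\<in>{..<k\<^sub>1}. y (\<sigma>\<^sub>1 i))) \<in> borel_measurable (PiM K (\<lambda>_. P))"
    by (rule measurable_compose[OF measurable_PiM_reindex[OF \<sigma>\<^sub>1(1)] f_P])
  have G: "(\<lambda>y. g (\<lambda>i\<in>{..<k\<^sub>2}. y (\<sigma>\<^sub>2 i))) \<in> borel_measurable (PiM K (\<lambda>_. P))"
    by (rule measurable_compose[OF measurable_PiM_reindex[OF \<sigma>\<^sub>2(1)] g_P])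
  have "sqrt (c ^ k\<^sub>1 * c ^ k\<^sub>2) = (c powr real (k\<^sub>1 + k\<^sub>2)) powr (1 / 2)"
    using c by (simp add: powr_add powr_realpow powr_half_sqrt)
  also have "\<dots> = c powr (real (k\<^sub>1 + k\<^sub>2) / 2)"
    by (simp add: powr_powr)
  finally have scale: "sqrt (c ^ k\<^sub>1 * c ^ k\<^sub>2) = c powr (real (k\<^sub>1 + k\<^sub>2) / 2)" .
  have bound_f: "ennreal (c ^ k\<^sub>1) *
      (\<integral>\<^sup>+y. ennreal ((f (\<lambda>i\<in>{..<k\<^sub>1}. y (\<sigma>\<^sub>1 i)))\<^sup>2) \<partial>PiM K (\<lambda>_. P))
      \<le> ennreal ((L2norm (PiM {..<k\<^sub>1} (\<lambda>_. M)) f)\<^sup>2)"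
    using nn_integral_PiM_reindex_square_le[OF P M sets le \<sigma>\<^sub>1 f] c by (simp add: ennreal_power)
  have bound_g: "ennreal (c ^ k\<^sub>2) *
      (\<integral>\<^sup>+y. ennreal ((g (\<lambda>i\<in>{..<k\<^sub>2}. y (\<sigma>\<^sub>2 i)))\<^sup>2) \<partial>PiM K (\<lambda>_. P))
      \<le> ennreal ((L2norm (PiM {..<k\<^sub>2} (\<lambda>_. M)) g)\<^sup>2)"
    using nn_integral_PiM_reindex_square_le[OF P M sets le \<sigma>\<^sub>2 g] c by (simp add: ennreal_power)
  note CS = scaled_Cauchy_Schwarz_integral_le[OF F G _ _ L2norm_nonneg L2norm_nonneg bound_f bound_g]
  show "integrable (PiM K (\<lambda>_. P)) h"
    and "c powr (real (k\<^sub>1 + k\<^sub>2) / 2) * \<bar>integral\<^sup>L (PiM K (\<lambda>_. P)) h\<bar>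
           \<le> L2norm (PiM {..<k\<^sub>1} (\<lambda>_. M)) f * L2norm (PiM {..<k\<^sub>2} (\<lambda>_. M)) g"
    using CS c by (simp_all add: h_def scale)
qed

lemma abs_integral_average_le:
  fixes h :: "'i \<Rightarrow> 'a \<Rightarrow> real"
  assumes "finite D" and "0 \<le> B"
    and int: "\<And>N. N \<in> D \<Longrightarrow> integrable Q (h N)"
    and bound: "\<And>N. N \<in> D \<Longrightarrow> \<bar>integral\<^sup>L Q (h N)\<bar> \<le> B"
  shows "\<bar>\<integral>y. 1 / real (card D) * (\<Sum>N\<in>D. h N y) \<partial>Q\<bar> \<le> B"
proof (cases "D = {}")
  case True
  then show ?thesis using \<open>0 \<le> B\<close> by simp
next
  case False
  then have "card D > 0"
    using \<open>finite D\<close> by (simp add: card_gt_0_iff)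
  have "\<bar>\<integral>y. 1 / real (card D) * (\<Sum>N\<in>D. h N y) \<partial>Q\<bar> = \<bar>\<Sum>N\<in>D. integral\<^sup>L Q (h N)\<bar> / real (card D)"
    using int by (simp add: integral_sum abs_mult)
  also have "\<dots> \<le> (\<Sum>N\<in>D. \<bar>integral\<^sup>L Q (h N)\<bar>) / real (card D)"
    by (intro divide_right_mono sum_abs) simp
  also have "\<dots> \<le> (\<Sum>N\<in>D. B) / real (card D)"
    by (intro divide_right_mono sum_mono bound) simp_all
  also have "\<dots> = B"
    using \<open>card D > 0\<close> by simp
  finally show ?thesis .
qed

lemma rank_less_card:
  assumes "finite R" "r \<in> R"
  shows "rank R r < card R"
  unfolding rank_def using assms by (intro psubset_card_mono) auto

lemma inj_on_rank:
  assumes "finite R"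
  shows "inj_on (rank R) R"
proof -
  have "strict_mono_on R (rank R)"
    unfolding rank_def using assms by (intro strict_mono_onI psubset_card_mono) auto
  then show ?thesis
    by (rule strict_mono_on_imp_inj_on)
qed

lemma finite_diagrams: "finite (diagrams k1 k2 l)"
proof (rule finite_subset)
  show "diagrams k1 k2 l \<subseteq> Pow ({..<k1} \<times> {k1..<k1+k2})"
    by (auto simp: diagrams_def)
qed simp

text \<open>In the contraction by a diagram \<open>N\<close>, variable \<open>i\<close> of \<open>f \<otimes> g\<close> is read from variable
  \<open>diagram_index k1 k2 N i\<close>: the rank of its partner among the remaining variables.\<close>

definition diagram_partner :: "(nat \<times> nat) set \<Rightarrow> nat \<Rightarrow> nat" where
  "diagram_partner N i = (if i \<in> snd ` N then THE j. (j, i) \<in> N else i)"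

definition diagram_index :: "nat \<Rightarrow> nat \<Rightarrow> (nat \<times> nat) set \<Rightarrow> nat \<Rightarrow> nat" where
  "diagram_index k1 k2 N i = rank ({..<k1+k2} - snd ` N) (diagram_partner N i)"

lemma contract_tensor:
  "contract k1 k2 N (tensor k1 k2 f g) y =
     f (\<lambda>i\<in>{..<k1}. y (diagram_index k1 k2 N i)) * g (\<lambda>i\<in>{..<k2}. y (diagram_index k1 k2 N (k1 + i)))"
  unfolding contract_def tensor_def diagram_index_def diagram_partner_def Let_def
  by (intro arg_cong2[where f="(*)"] arg_cong[where f=f] arg_cong[where f=g] ext) auto

lemma diagram_partner_mem:
  assumes N: "N \<in> diagrams k1 k2 l" and i: "i \<in> snd ` N"
  shows "(diagram_partner N i, i) \<in> N"
proof -
  obtain j where j: "(j, i) \<in> N"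
    using i by force
  have "inj_on snd N"
    using N by (simp add: diagrams_def)
  have "(THE j. (j, i) \<in> N) = j"
  proof (rule the_equality[where P="\<lambda>j. (j, i) \<in> N", OF j])
    fix j' assume "(j', i) \<in> N"
    then show "j' = j"
      using inj_onD[OF \<open>inj_on snd N\<close>, of "(j', i)" "(j, i)"] j by simp
  qed
  then show ?thesis
    using i j by (simp add: diagram_partner_def)
qed

lemma diagram_partner_cases:
  assumes N: "N \<in> diagrams k1 k2 l"
  obtains "i \<in> snd ` N" "diagram_partner N i < k1" | "i \<notin> snd ` N" "diagram_partner N i = i"
proof (cases "i \<in> snd ` N")
  case True
  have "N \<subseteq> {..<k1} \<times> {k1..<k1+k2}"
    using N by (simp add: diagrams_def)
  then have "diagram_partner N i < k1"
    using diagram_partner_mem[OF N True] by blast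
  with True that show ?thesis by blast
qed (simp add: diagram_partner_def that)

lemma snd_diagram_ge:
  assumes "N \<in> diagrams k1 k2 l" and "i \<in> snd ` N"
  shows "k1 \<le> i"
  using assms by (auto simp: diagrams_def)

lemma diagram_partner_remaining:
  assumes N: "N \<in> diagrams k1 k2 l" and i: "i < k1 + k2"
  shows "diagram_partner N i \<in> {..<k1+k2} - snd ` N"
proof (cases rule: diagram_partner_cases[OF N, of i])
  case 1
  then show ?thesis
    using snd_diagram_ge[OF N, of "diagram_partner N i"] by auto
next
  case 2
  then show ?thesis
    using i by simp
qed

lemma card_diagram_remaining:
  assumes N: "N \<in> diagrams k1 k2 l"
  shows "card ({..<k1+k2} - snd ` N) = k1 + k2 - l"
proof -
  have sub: "N \<subseteq> {..<k1} \<times> {k1..<k1+k2}" and "card N = l" and "inj_on snd N"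
    using N by (simp_all add: diagrams_def)
  have "finite N"
    using sub by (rule finite_subset) simp
  have "card (snd ` N) = l"
    using card_image[OF \<open>inj_on snd N\<close>] \<open>card N = l\<close> by simp
  moreover have "snd ` N \<subseteq> {..<k1+k2}"
    using sub by auto
  ultimately show ?thesis
    using \<open>finite N\<close> by (simp add: card_Diff_subset)
qed

lemma diagram_index_less:
  assumes N: "N \<in> diagrams k1 k2 l" and i: "i < k1 + k2"
  shows "diagram_index k1 k2 N i < k1 + k2 - l"
  using rank_less_card[OF _ diagram_partner_remaining[OF N i]] card_diagram_remaining[OF N]
  by (simp add: diagram_index_def)

lemma inj_on_diagram_partner:
  assumes N: "N \<in> diagrams k1 k2 l"
  shows "inj_on (diagram_partner N) {..<k1}" and "inj_on (diagram_partner N) {k1..<k1+k2}"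
proof -
  have "diagram_partner N i = i" if "i < k1" for i
    using snd_diagram_ge[OF N, of i] that by (cases rule: diagram_partner_cases[OF N, of i]) auto
  then show "inj_on (diagram_partner N) {..<k1}"
    by (simp add: inj_on_def)
  have "inj_on fst N"
    using N by (simp add: diagrams_def)
  have in_snd_iff: "diagram_partner N j < k1 \<longleftrightarrow> j \<in> snd ` N" if "k1 \<le> j" for j
    using that by (cases rule: diagram_partner_cases[OF N, of j]) auto
  show "inj_on (diagram_partner N) {k1..<k1+k2}"
  proof (rule inj_onI)
    fix i i' assume "i \<in> {k1..<k1+k2}" "i' \<in> {k1..<k1+k2}"
      and eq: "diagram_partner N i = diagram_partner N i'"
    then have iff: "i \<in> snd ` N \<longleftrightarrow> i' \<in> snd ` N"
      using in_snd_iff[of i] in_snd_iff[of i'] by simp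
    show "i = i'"
    proof (cases "i \<in> snd ` N")
      case True
      then have "(diagram_partner N i, i) \<in> N" "(diagram_partner N i, i') \<in> N"
        using iff diagram_partner_mem[OF N, of i] diagram_partner_mem[OF N, of i'] eq by simp_all
      then show ?thesis
        using inj_onD[OF \<open>inj_on fst N\<close>] by fastforce
    next
      case False
      then show ?thesis
        using iff eq by (simp add: diagram_partner_def)
    qed
  qed
qed

lemma diagram_index_in_funcset:
  assumes N: "N \<in> diagrams k1 k2 l"
  shows "diagram_index k1 k2 N \<in> {..<k1} \<rightarrow> {..<k1 + k2 - l}"
    and "(\<lambda>i. diagram_index k1 k2 N (k1 + i)) \<in> {..<k2} \<rightarrow> {..<k1 + k2 - l}"
  using diagram_index_less[OF N] by auto

lemma inj_on_diagram_index:
  assumes N: "N \<in> diagrams k1 k2 l"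
  shows "inj_on (diagram_index k1 k2 N) {..<k1}"
    and "inj_on (\<lambda>i. diagram_index k1 k2 N (k1 + i)) {..<k2}"
proof -
  let ?R = "{..<k1+k2} - snd ` N"
  have rank: "inj_on (rank ?R) (diagram_partner N ` A)" if "A \<subseteq> {..<k1+k2}" for A
  proof (rule inj_on_subset[OF inj_on_rank])
    show "diagram_partner N ` A \<subseteq> ?R"
      by (intro image_subsetI diagram_partner_remaining[OF N]) (use that in auto)
  qed simp
  have "inj_on (rank ?R \<circ> diagram_partner N) {..<k1}"
    by (intro comp_inj_on inj_on_diagram_partner(1)[OF N] rank) auto
  then show "inj_on (diagram_index k1 k2 N) {..<k1}"
    by (simp add: diagram_index_def[abs_def] comp_def)
  have "inj_on (rank ?R \<circ> diagram_partner N) {k1..<k1+k2}"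
    by (intro comp_inj_on inj_on_diagram_partner(2)[OF N] rank) auto
  then have "inj_on (diagram_index k1 k2 N) ((+) k1 ` {..<k2})"
    by (simp add: diagram_index_def[abs_def] comp_def lessThan_atLeast0 add.commute)
  then show "inj_on (\<lambda>i. diagram_index k1 k2 N (k1 + i)) {..<k2}"
    using comp_inj_on[of "(+) k1" "{..<k2}" "diagram_index k1 k2 N"] by (simp add: comp_def)
qed

theorem lemma5:
  fixes M :: "'a measure" and a :: "nat \<Rightarrow> real" and P :: "nat \<Rightarrow> 'a measure"
    and k1 k2 l n :: nat and f g :: "(nat \<Rightarrow> 'a) \<Rightarrow> real"
  assumes sf: "sigma_finite_measure M"
    and na: "nonatomic M"
    and inf: "emeasure M (space M) = \<infinity>"
    and apos: "\<And>m. m \<ge> 1 \<Longrightarrow> a m > 0"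
    and atop: "filterlim a at_top sequentially"
    and asmall: "a \<in> o(\<lambda>m. real m)"
    and Pprob: "\<And>m. m \<ge> 1 \<Longrightarrow> prob_space (P m)"
    and Psets: "\<And>m. m \<ge> 1 \<Longrightarrow> sets (P m) = sets M"
    and Pmono: "\<And>m B. m \<ge> 1 \<Longrightarrow> B \<in> sets M \<Longrightarrow>
        ennreal (real m / a m) * emeasure (P m) B
          \<le> ennreal (real (Suc m) / a (Suc m)) * emeasure (P (Suc m)) B"
    and Plim: "\<And>B. B \<in> sets M \<Longrightarrow>
        ((\<lambda>m. ennreal (real m / a m) * emeasure (P m) B) \<longlongrightarrow> emeasure M B) sequentially"
    and k1: "k1 \<ge> 1" and k2: "k2 \<ge> 1"
    and f: "memL2 (PiM {..<k1} (\<lambda>_. M)) f"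
    and g: "memL2 (PiM {..<k2} (\<lambda>_. M)) g"
    and l: "l \<le> min k1 k2"
    and n: "n \<ge> 1"
  shows "\<bar>F_l k1 k2 l (real n) (a n) (P n) f g\<bar>
           \<le> L2norm (PiM {..<k1} (\<lambda>_. M)) f * L2norm (PiM {..<k2} (\<lambda>_. M)) g"
proof -
  define c where "c = real n / a n"
  define s where "s = c powr (real (k1 + k2) / 2)"
  define B where "B = L2norm (PiM {..<k1} (\<lambda>_. M)) f * L2norm (PiM {..<k2} (\<lambda>_. M)) g"
  define Q where "Q = PiM {..<k1 + k2 - l} (\<lambda>_. P n)"
  define h where "h N = contract k1 k2 N (tensor k1 k2 f g)" for N
  have c: "0 < c"
    using apos[OF n] n by (simp add: c_def)
  then have s: "0 < s"
    by (simp add: s_def)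
  have dominated: "ennreal c * emeasure (P n) A \<le> emeasure M A" if "A \<in> sets M" for A
    unfolding c_def using Pmono[OF _ that] n by (intro LIMSEQ_le_if_incseq_from[OF _ Plim[OF that]]) simp
  have "integrable Q (h N) \<and> s * \<bar>integral\<^sup>L Q (h N)\<bar> \<le> B" if N: "N \<in> diagrams k1 k2 l" for N
    using reindexed_product_integral_le[OF Pprob[OF n] sf Psets[OF n] c dominated
        diagram_index_in_funcset(1)[OF N] inj_on_diagram_index(1)[OF N]
        diagram_index_in_funcset(2)[OF N] inj_on_diagram_index(2)[OF N] f g]
    by (simp add: h_def contract_tensor[abs_def] s_def B_def Q_def)
  then have "\<bar>\<integral>y. 1 / real (card (diagrams k1 k2 l)) * (\<Sum>N\<in>diagrams k1 k2 l. h N y) \<partial>Q\<bar> \<le> B / s"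
    using s by (intro abs_integral_average_le finite_diagrams)
      (auto simp: B_def L2norm_nonneg pos_le_divide_eq mult.commute)
  moreover have "F_l k1 k2 l (real n) (a n) (P n) f g
      = s * (\<integral>y. 1 / real (card (diagrams k1 k2 l)) * (\<Sum>N\<in>diagrams k1 k2 l. h N y) \<partial>Q)"
    unfolding F_l_def s_def c_def Q_def h_def ..
  ultimately show ?thesis
    using s by (simp add: B_def[symmetric] abs_mult pos_le_divide_eq mult.commute)
qed

end
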